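(* Let $n\in\mathbb N$ and let $\mu$ be any probability measure on $[n]=\{1,\dots,n\}$. Fix $q,z\in\mathbb N$ with $z\ge 2n^{1-1/q}$. Let $x_1,\dots,x_{qz}$ be chosen independently at random according to $\mu$. Then $$\Pr\Big(\exists\, i_1,\dots,i_q \text{ with } (j-1)z<i_j\le jz \text{ for each } j,\ x_{i_1}=x_{i_2}=\dots=x_{i_q}\Big)\ \ge\ 1-e^{-cz/n^{1-1/q}}$$ for any $c\le -\tfrac14\ln(1-2^{-q})$, and in particular for any $c\le 2^{-q-2}$. *)

theory Defs
  imports "HOL-Probability.Probability"
begin

definition block_collision :: "nat \<Rightarrow> nat \<Rightarrow> (nat \<Rightarrow> nat) set" where
  "block_collision q z = {x. \<exists>ind :: nat \<Rightarrow> nat.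
      (\<forall>j\<in>{1..q}. (j - 1) * z < ind j \<and> ind j \<le> j * z) \<and>
      (\<forall>j\<in>{1..q}. \<forall>k\<in>{1..q}. x (ind j) = x (ind k))}"

end

theory Submission
  imports Defs
begin

text \<open>Cut each of the \<open>q\<close> blocks into \<open>\<lfloor>z/s\<rfloor>\<close> runs of \<open>s = \<lceil>n\<^sup>1\<^sup>-\<^sup>1\<^sup>/\<^sup>q\<rceil>\<close> consecutive
  positions. For a fixed run index \<open>i\<close>, the \<open>i\<close>-th runs of the \<open>q\<close> blocks form an experiment,
  and a second moment argument on the number of values occurring in all \<open>q\<close> of these runs
  shows that some value is common to them with probability at least \<open>2\<^sup>-\<^sup>q\<close>; here
  \<open>s\<^sup>q \<ge> n\<^sup>q\<^sup>-\<^sup>1\<close> is exactly what makes \<open>\<Sum>\<^sub>v min(1, s \<mu>(v))\<^sup>q \<ge> 1\<close>.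
  The \<open>\<lfloor>z/s\<rfloor>\<close> experiments use disjoint positions, hence are independent, and all of them
  fail with probability at most \<open>(1 - 2\<^sup>-\<^sup>q)\<^bsup>\<lfloor>z/s\<rfloor>\<^esup> \<le> exp (-c z / n\<^sup>1\<^sup>-\<^sup>1\<^sup>/\<^sup>q)\<close>.\<close>

definition determined_by :: "('a \<Rightarrow> 'b) set \<Rightarrow> 'a set \<Rightarrow> bool" where
  "determined_by S A \<longleftrightarrow> (\<forall>x y. (\<forall>i\<in>A. x i = y i) \<longrightarrow> (x \<in> S \<longleftrightarrow> y \<in> S))"

lemma determined_byD:
  "determined_by S A \<Longrightarrow> (\<And>i. i \<in> A \<Longrightarrow> x i = y i) \<Longrightarrow> x \<in> S \<longleftrightarrow> y \<in> S"
  unfolding determined_by_def by blast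

lemma determined_by_Compl [simp]: "determined_by (- S) A \<longleftrightarrow> determined_by S A"
  unfolding determined_by_def by blast

lemma determined_by_INT:
  "(\<And>j. j \<in> J \<Longrightarrow> determined_by (S j) (C j)) \<Longrightarrow> determined_by (\<Inter>j\<in>J. S j) (\<Union>j\<in>J. C j)"
  unfolding determined_by_def by (metis (no_types, lifting) INT_iff UN_I)

lemma measure_pmf_prob_Compl: "measure_pmf.prob M (- A) = 1 - measure_pmf.prob M A"
  using measure_pmf.prob_compl[of A M] by (simp add: Compl_eq_Diff_UNIV)

lemma Pi_pmf_prob_Int_independent:
  fixes p :: "'a \<Rightarrow> 'b pmf"
  assumes fin: "finite A" "finite B" and disj: "A \<inter> B = {}"
    and S: "determined_by S A" and T: "determined_by T B"
  shows "measure_pmf.prob (Pi_pmf (A \<union> B) d p) (S \<inter> T) =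
         measure_pmf.prob (Pi_pmf A d p) S * measure_pmf.prob (Pi_pmf B d p) T"
proof -
  let ?h = "\<lambda>(f,g) x. if x \<in> A then f x else g x"
  let ?PA = "Pi_pmf A d p" and ?PB = "Pi_pmf B d p"
  let ?R = "(S \<inter> set_pmf ?PA) \<times> (T \<inter> set_pmf ?PB)"
  have glue: "?h fg \<in> S \<inter> T \<longleftrightarrow> fg \<in> ?R" if "fg \<in> set_pmf (pair_pmf ?PA ?PB)" for fg
  proof -
    obtain f g where fg: "fg = (f, g)" by (cases fg)
    have "?h fg \<in> S \<longleftrightarrow> f \<in> S" by (rule determined_byD[OF S]) (simp add: fg)
    moreover have "?h fg \<in> T \<longleftrightarrow> g \<in> T" by (rule determined_byD[OF T]) (use fg disj in auto)
    ultimately show ?thesis using that fg by auto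
  qed
  have "measure_pmf.prob (Pi_pmf (A \<union> B) d p) (S \<inter> T) =
        measure_pmf.prob (pair_pmf ?PA ?PB) (?h -` (S \<inter> T))"
    by (simp add: Pi_pmf_union[OF fin disj])
  also have "\<dots> = measure_pmf.prob (pair_pmf ?PA ?PB) ?R"
    by (rule measure_prob_cong_0) (use glue in \<open>auto simp: set_pmf_eq\<close>)
  also have "\<dots> = measure_pmf.prob ?PA (S \<inter> set_pmf ?PA) * measure_pmf.prob ?PB (T \<inter> set_pmf ?PB)"
    by (rule measure_pmf_prob_product) auto
  also have "\<dots> = measure_pmf.prob ?PA S * measure_pmf.prob ?PB T"
    by (simp add: measure_Int_set_pmf)
  finally show ?thesis .
qed

lemma Pi_pmf_prob_INT_independent:
  fixes p :: "'a \<Rightarrow> 'b pmf" and C :: "'j \<Rightarrow> 'a set"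
  assumes "finite J" "\<And>j. j \<in> J \<Longrightarrow> finite (C j)" "disjoint_family_on C J"
    and "\<And>j. j \<in> J \<Longrightarrow> determined_by (S j) (C j)"
  shows "measure_pmf.prob (Pi_pmf (\<Union>j\<in>J. C j) d p) (\<Inter>j\<in>J. S j) =
         (\<Prod>j\<in>J. measure_pmf.prob (Pi_pmf (C j) d p) (S j))"
  using assms
proof (induction J rule: finite_induct)
  case (insert j J)
  have "disjoint_family_on C J" using insert.prems(2) by (auto simp: disjoint_family_on_def)
  moreover have "C j \<inter> (\<Union>i\<in>J. C i) = {}"
    using insert.prems(2) insert.hyps(2) unfolding disjoint_family_on_def by fastforce
  ultimately show ?case
    using insert by (simp add: Pi_pmf_prob_Int_independent determined_by_INT)
qed simp

lemma Pi_pmf_prob_restrict: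
  fixes p :: "'a \<Rightarrow> 'b pmf"
  assumes "finite I" "A \<subseteq> I" and S: "determined_by S A"
  shows "measure_pmf.prob (Pi_pmf I d p) S = measure_pmf.prob (Pi_pmf A d p) S"
proof -
  have "(\<lambda>x. if x \<in> A then f x else d) \<in> S \<longleftrightarrow> f \<in> S" for f
    by (rule determined_byD[OF S]) simp
  then have "(\<lambda>f x. if x \<in> A then f x else d) -` S = S" by blast
  then show ?thesis by (simp add: Pi_pmf_subset[OF assms(1,2)])
qed

lemma Pi_pmf_prob_UN_independent_ge:
  fixes p :: "'a \<Rightarrow> 'b pmf" and D :: "'k \<Rightarrow> 'a set"
  assumes I: "finite I" and K: "finite K" and disj: "disjoint_family_on D K"
    and D: "\<And>i. i \<in> K \<Longrightarrow> D i \<subseteq> I" and E: "\<And>i. i \<in> K \<Longrightarrow> determined_by (E i) (D i)"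
    and r: "\<And>i. i \<in> K \<Longrightarrow> r \<le> measure_pmf.prob (Pi_pmf (D i) d p) (E i)"
  shows "1 - (1 - r) ^ card K \<le> measure_pmf.prob (Pi_pmf I d p) (\<Union>i\<in>K. E i)"
proof -
  have finD: "finite (D i)" if "i \<in> K" for i using D[OF that] I by (rule finite_subset)
  have compl: "- (\<Union>i\<in>K. E i) = (\<Inter>i\<in>K. - E i)" by blast
  have "measure_pmf.prob (Pi_pmf I d p) (- (\<Union>i\<in>K. E i))
      = measure_pmf.prob (Pi_pmf (\<Union>i\<in>K. D i) d p) (\<Inter>i\<in>K. - E i)"
    unfolding compl
    using D E by (intro Pi_pmf_prob_restrict I determined_by_INT) auto
  also have "\<dots> = (\<Prod>i\<in>K. 1 - measure_pmf.prob (Pi_pmf (D i) d p) (E i))"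
    using E finD by (simp add: Pi_pmf_prob_INT_independent[OF K _ disj] measure_pmf_prob_Compl)
  also have "\<dots> \<le> (\<Prod>i\<in>K. 1 - r)"
    using r by (intro prod_mono) (auto simp: measure_pmf.prob_le_1)
  finally show ?thesis
    using measure_pmf_prob_Compl[of "Pi_pmf I d p" "\<Union>i\<in>K. E i"] by simp
qed

lemma Pi_pmf_prob_avoid:
  assumes "finite C"
  shows "measure_pmf.prob (Pi_pmf C d (\<lambda>_. \<mu>)) (Pi C (\<lambda>_. - W)) = (1 - measure_pmf.prob \<mu> W) ^ card C"
  using assms by (simp add: measure_Pi_pmf_Pi measure_pmf_prob_Compl)

lemma Pi_pmf_prob_hit:
  assumes "finite C"
  shows "measure_pmf.prob (Pi_pmf C d (\<lambda>_. \<mu>)) {x. \<exists>l\<in>C. x l = v} = 1 - (1 - pmf \<mu> v) ^ card C"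
proof -
  have "{x. \<exists>l\<in>C. x l = v} = - Pi C (\<lambda>_. - {v})" by auto
  then show ?thesis
    by (simp add: measure_pmf_prob_Compl Pi_pmf_prob_avoid[OF assms] measure_pmf_single)
qed

text \<open>Hitting two distinct values is negatively correlated:
  \<open>(1 - p - p')\<^sup>s \<le> (1 - p)\<^sup>s (1 - p')\<^sup>s\<close> plus inclusion-exclusion.\<close>
lemma Pi_pmf_prob_hit_both_le:
  assumes "finite C" "v \<noteq> w"
  shows "measure_pmf.prob (Pi_pmf C d (\<lambda>_. \<mu>)) {x. (\<exists>l\<in>C. x l = v) \<and> (\<exists>l\<in>C. x l = w)}
     \<le> (1 - (1 - pmf \<mu> v) ^ card C) * (1 - (1 - pmf \<mu> w) ^ card C)"
proof -
  let ?P = "Pi_pmf C d (\<lambda>_. \<mu>)" and ?s = "card C"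
  let ?V = "Pi C (\<lambda>_. - {v})" and ?W = "Pi C (\<lambda>_. - {w})"
  have vw: "measure_pmf.prob \<mu> {v, w} = pmf \<mu> v + pmf \<mu> w"
    using assms(2) by (simp add: measure_measure_pmf_finite)
  then have le1: "pmf \<mu> v + pmf \<mu> w \<le> 1" using measure_pmf.prob_le_1[of \<mu> "{v, w}"] by simp
  have hit: "{x. (\<exists>l\<in>C. x l = v) \<and> (\<exists>l\<in>C. x l = w)} = - (?V \<union> ?W)" by auto
  have "?V \<inter> ?W = Pi C (\<lambda>_. - {v, w})" by auto
  then have "measure_pmf.prob ?P (?V \<union> ?W) =
      (1 - pmf \<mu> v) ^ ?s + (1 - pmf \<mu> w) ^ ?s - (1 - (pmf \<mu> v + pmf \<mu> w)) ^ ?s"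
    by (simp add: measure_pmf.finite_measure_Union' measure_pmf.finite_measure_Diff' Int_commute
        Pi_pmf_prob_avoid[OF assms(1)] measure_pmf_single vw)
  then have "measure_pmf.prob ?P {x. (\<exists>l\<in>C. x l = v) \<and> (\<exists>l\<in>C. x l = w)} =
      1 - (1 - pmf \<mu> v) ^ ?s - (1 - pmf \<mu> w) ^ ?s + (1 - (pmf \<mu> v + pmf \<mu> w)) ^ ?s"
    unfolding hit measure_pmf_prob_Compl by simp
  also have "(1 - (pmf \<mu> v + pmf \<mu> w)) ^ ?s \<le> (1 - pmf \<mu> v) ^ ?s * (1 - pmf \<mu> w) ^ ?s"
    unfolding power_mult_distrib[symmetric] using le1 by (intro power_mono) (auto simp: algebra_simps)
  finally show ?thesis by (simp add: algebra_simps)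
qed

lemma exp_minus_one_le: "exp (-1::real) \<le> 2/5"
proof -
  have "(5/2::real) \<le> (9/8) ^ 8" by (simp add: eval_nat_numeral)
  also have "\<dots> \<le> exp (1/8) ^ 8"
    by (rule power_mono) (use exp_ge_add_one_self[of "1/8::real"] in auto)
  also have "\<dots> = exp 1" by (simp flip: exp_of_nat_mult)
  finally show ?thesis by (simp add: exp_minus field_simps)
qed

lemma one_minus_exp_ge_min:
  fixes x :: real assumes "x \<ge> 0"
  shows "3/5 * min 1 x \<le> 1 - exp (-x)"
proof (cases "x \<le> 1")
  case True
  have "exp ((1 - x) *\<^sub>R 0 + x *\<^sub>R (-1)) \<le> (1 - x) * exp 0 + x * exp (-1::real)"
    using convex_onD[OF convex_on_exp[of 1], of x 0 "-1"] True assms by simp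
  then show ?thesis using True assms mult_left_mono[OF exp_minus_one_le assms] by simp
next
  case False
  then have "exp (-x) \<le> exp (-1)" and "min 1 x = 1" by simp_all
  then show ?thesis using exp_minus_one_le by linarith
qed

lemma one_minus_power_ge_min:
  fixes p :: real assumes "0 \<le> p" "p \<le> 1"
  shows "3/5 * min 1 (real s * p) \<le> 1 - (1 - p) ^ s"
proof -
  have "(1 - p) ^ s \<le> exp (-p) ^ s"
    by (rule power_mono) (use exp_ge_add_one_self[of "-p"] assms in auto)
  also have "\<dots> = exp (- (real s * p))" by (simp flip: exp_of_nat_mult)
  finally show ?thesis using one_minus_exp_ge_min[of "real s * p"] assms by simp
qed

text \<open>Bernoulli's inequality \<open>(n p)\<^sup>q \<ge> 1 + q (n p - 1)\<close> is convexity of \<open>t\<^sup>q\<close>: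
  averaging it over \<open>V\<close> gives \<open>\<Sum>\<^sub>v (s p\<^sub>v)\<^sup>q \<ge> s\<^sup>q / n\<^sup>q\<^sup>-\<^sup>1\<close>.\<close>
lemma sum_min_power_ge_one:
  fixes \<mu> :: "'a pmf"
  assumes V: "finite V" "set_pmf \<mu> \<subseteq> V" and q: "q \<ge> 1"
    and s: "real (card V) ^ (q - 1) \<le> real s ^ q"
  shows "1 \<le> (\<Sum>v\<in>V. min 1 (real s * pmf \<mu> v) ^ q)"
proof (cases "\<exists>v\<in>V. 1 \<le> real s * pmf \<mu> v")
  case True
  then obtain v where v: "v \<in> V" "1 \<le> real s * pmf \<mu> v" by blast
  then have "min 1 (real s * pmf \<mu> v) ^ q = 1" by simp
  moreover have "min 1 (real s * pmf \<mu> v) ^ q \<le> (\<Sum>v\<in>V. min 1 (real s * pmf \<mu> v) ^ q)"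
    using v V by (intro member_le_sum) auto
  ultimately show ?thesis by simp
next
  case False
  define n where "n = real (card V)"
  have "V \<noteq> {}" using V set_pmf_not_empty[of \<mu>] by blast
  then have n: "n \<ge> 1" using V by (simp add: n_def Suc_le_eq card_gt_0_iff)
  have sum1: "(\<Sum>v\<in>V. pmf \<mu> v) = 1" by (rule sum_pmf_eq_1) (use V in auto)
  have "real s ^ q / n ^ (q - 1) = (real s / n) ^ q * (\<Sum>v\<in>V. 1 + real q * (n * pmf \<mu> v - 1))"
    using n q power_eq_if[of n q]
    by (simp add: sum.distrib sum_subtractf sum_distrib_left[symmetric] sum1 power_divide n_def)
  also have "\<dots> \<le> (real s / n) ^ q * (\<Sum>v\<in>V. (n * pmf \<mu> v) ^ q)"
    using Bernoulli_inequality[of "n * pmf \<mu> _ - 1" q] n by (intro mult_left_mono sum_mono) auto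
  also have "\<dots> = (\<Sum>v\<in>V. min 1 (real s * pmf \<mu> v) ^ q)"
    using False n by (auto simp: sum_distrib_left power_mult_distrib[symmetric] intro!: sum.cong)
  finally have "real s ^ q / n ^ (q - 1) \<le> (\<Sum>v\<in>V. min 1 (real s * pmf \<mu> v) ^ q)" .
  moreover have "1 \<le> real s ^ q / n ^ (q - 1)" using s n by (simp add: n_def le_divide_eq)
  ultimately show ?thesis by linarith
qed

text \<open>Pointwise \<open>1\<^sub>E \<ge> 1 - (1 - \<lambda> Y)\<^sup>2\<close> on \<open>{Y \<noteq> 0}\<close>; integrate with \<open>\<lambda> = \<bbbE> Y / S\<close>.\<close>
lemma (in prob_space) second_moment_method:
  fixes Y :: "'a \<Rightarrow> real"
  assumes Y: "integrable M Y" and Y2: "integrable M (\<lambda>x. Y x ^ 2)" and E: "E \<in> events"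
    and nonzero: "\<And>x. x \<in> space M \<Longrightarrow> Y x \<noteq> 0 \<Longrightarrow> x \<in> E"
    and S: "expectation (\<lambda>x. Y x ^ 2) \<le> S" "S > 0"
  shows "expectation Y ^ 2 / S \<le> prob E"
proof -
  define m where "m = expectation Y"
  define l where "l = m / S"
  have "2 * l * Y x - l ^ 2 * Y x ^ 2 \<le> indicator E x" if "x \<in> space M" for x
  proof (cases "Y x = 0")
    case False
    have "2 * l * Y x - l ^ 2 * Y x ^ 2 = 1 - (1 - l * Y x) ^ 2" by (simp add: power2_eq_square algebra_simps)
    also have "\<dots> \<le> 1" by simp
    finally show ?thesis using nonzero[OF that False] by simp
  qed simp
  then have "expectation (\<lambda>x. 2 * l * Y x - l ^ 2 * Y x ^ 2) \<le> expectation (indicator E)"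
    using E by (intro integral_mono)
      (auto intro!: Bochner_Integration.integrable_diff Y Y2 integrable_real_indicator
        simp: less_top[symmetric])
  also have "expectation (\<lambda>x. 2 * l * Y x - l ^ 2 * Y x ^ 2)
      = 2 * l * m - l ^ 2 * expectation (\<lambda>x. Y x ^ 2)"
    using Y Y2 by (simp add: m_def)
  finally have "2 * l * m - l ^ 2 * S \<le> prob E"
    using E S mult_left_mono[OF S(1), of "l ^ 2"] by simp
  also have "2 * l * m - l ^ 2 * S = m ^ 2 / S"
    using S by (simp add: l_def power2_eq_square field_simps)
  finally show ?thesis by (simp add: m_def)
qed

definition common_value :: "('k \<Rightarrow> 'a set) \<Rightarrow> 'k set \<Rightarrow> ('a \<Rightarrow> 'b) set" where
  "common_value C J = {x. \<exists>v. \<forall>j\<in>J. \<exists>l\<in>C j. x l = v}"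

lemma determined_by_hit: "determined_by {x. \<exists>l\<in>C. x l = v} C"
  unfolding determined_by_def by auto

lemma determined_by_common_value: "determined_by (common_value C J) (\<Union>j\<in>J. C j)"
  unfolding determined_by_def common_value_def by (auto 0 3)

lemma Pi_pmf_prob_hit_all:
  assumes J: "finite J" "disjoint_family_on C J"
    and C: "\<And>j. j \<in> J \<Longrightarrow> finite (C j) \<and> card (C j) = s"
  shows "measure_pmf.prob (Pi_pmf (\<Union>j\<in>J. C j) d (\<lambda>_. \<mu>)) {x. \<forall>j\<in>J. \<exists>l\<in>C j. x l = v}
    = (1 - (1 - pmf \<mu> v) ^ s) ^ card J"
proof -
  have hit_all: "{x. \<forall>j\<in>J. \<exists>l\<in>C j. x l = v} = (\<Inter>j\<in>J. {x. \<exists>l\<in>C j. x l = v})" by auto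
  have "measure_pmf.prob (Pi_pmf (\<Union>j\<in>J. C j) d (\<lambda>_. \<mu>)) {x. \<forall>j\<in>J. \<exists>l\<in>C j. x l = v}
      = (\<Prod>j\<in>J. measure_pmf.prob (Pi_pmf (C j) d (\<lambda>_. \<mu>)) {x. \<exists>l\<in>C j. x l = v})"
    unfolding hit_all
    by (rule Pi_pmf_prob_INT_independent) (use J C in \<open>auto simp: determined_by_hit\<close>)
  also have "\<dots> = (\<Prod>j\<in>J. 1 - (1 - pmf \<mu> v) ^ s)"
    using C by (intro prod.cong) (simp_all add: Pi_pmf_prob_hit)
  finally show ?thesis by simp
qed

lemma Pi_pmf_prob_hit_all_both_le:
  assumes J: "finite J" "disjoint_family_on C J" and "v \<noteq> w"
    and C: "\<And>j. j \<in> J \<Longrightarrow> finite (C j) \<and> card (C j) = s"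
  shows "measure_pmf.prob (Pi_pmf (\<Union>j\<in>J. C j) d (\<lambda>_. \<mu>))
      ({x. \<forall>j\<in>J. \<exists>l\<in>C j. x l = v} \<inter> {x. \<forall>j\<in>J. \<exists>l\<in>C j. x l = w})
    \<le> ((1 - (1 - pmf \<mu> v) ^ s) * (1 - (1 - pmf \<mu> w) ^ s)) ^ card J"
proof -
  have "{x. \<forall>j\<in>J. \<exists>l\<in>C j. x l = v} \<inter> {x. \<forall>j\<in>J. \<exists>l\<in>C j. x l = w}
      = (\<Inter>j\<in>J. {x. (\<exists>l\<in>C j. x l = v) \<and> (\<exists>l\<in>C j. x l = w)})" by auto
  moreover have "determined_by {x. (\<exists>l\<in>C j. x l = v) \<and> (\<exists>l\<in>C j. x l = w)} (C j)" for j
    unfolding determined_by_def by auto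
  ultimately have "measure_pmf.prob (Pi_pmf (\<Union>j\<in>J. C j) d (\<lambda>_. \<mu>))
      ({x. \<forall>j\<in>J. \<exists>l\<in>C j. x l = v} \<inter> {x. \<forall>j\<in>J. \<exists>l\<in>C j. x l = w})
    = (\<Prod>j\<in>J. measure_pmf.prob (Pi_pmf (C j) d (\<lambda>_. \<mu>))
        {x. (\<exists>l\<in>C j. x l = v) \<and> (\<exists>l\<in>C j. x l = w)})"
    using J C by (simp add: Pi_pmf_prob_INT_independent)
  also have "\<dots> \<le> (\<Prod>j\<in>J. (1 - (1 - pmf \<mu> v) ^ s) * (1 - (1 - pmf \<mu> w) ^ s))"
  proof (intro prod_mono conjI measure_nonneg)
    fix j assume "j \<in> J"
    then show "measure_pmf.prob (Pi_pmf (C j) d (\<lambda>_. \<mu>)) {x. (\<exists>l\<in>C j. x l = v) \<and> (\<exists>l\<in>C j. x l = w)}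
        \<le> (1 - (1 - pmf \<mu> v) ^ s) * (1 - (1 - pmf \<mu> w) ^ s)"
      using C Pi_pmf_prob_hit_both_le[of "C j" v w d \<mu>] \<open>v \<noteq> w\<close> by simp
  qed
  finally show ?thesis by simp
qed

lemma sum_hit_power_ge:
  fixes \<mu> :: "'a pmf"
  assumes "finite V" "set_pmf \<mu> \<subseteq> V" "q \<ge> 1" "real (card V) ^ (q - 1) \<le> real s ^ q"
  shows "(3/5) ^ q \<le> (\<Sum>v\<in>V. (1 - (1 - pmf \<mu> v) ^ s) ^ q)"
proof -
  have "(3/5::real) ^ q \<le> (3/5) ^ q * (\<Sum>v\<in>V. min 1 (real s * pmf \<mu> v) ^ q)"
    using sum_min_power_ge_one[OF assms] by simp
  also have "\<dots> = (\<Sum>v\<in>V. (3/5 * min 1 (real s * pmf \<mu> v)) ^ q)"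
    by (simp only: sum_distrib_left power_mult_distrib)
  also have "\<dots> \<le> (\<Sum>v\<in>V. (1 - (1 - pmf \<mu> v) ^ s) ^ q)"
    by (intro sum_mono power_mono one_minus_power_ge_min) (auto simp: pmf_le_1)
  finally show ?thesis .
qed

lemma half_power_le_frac:
  fixes m :: real
  assumes "q \<ge> 2" "(3/5) ^ q \<le> m"
  shows "(1/2) ^ q \<le> m / (1 + m)"
proof -
  have "1 + (3/5::real) ^ q \<le> (6/5) ^ 2"
    using power_decreasing[OF assms(1), of "3/5::real"] by (simp add: power2_eq_square)
  also have "\<dots> \<le> (6/5) ^ q" by (rule power_increasing) (use assms in auto)
  also have "\<dots> = 2 ^ q * (3/5) ^ q" by (simp flip: power_mult_distrib)
  finally have "(1/2) ^ q * (1 + (3/5) ^ q) \<le> (3/5::real) ^ q"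
    by (simp add: power_one_over field_simps)
  moreover have "(1/2::real) ^ q * (m - (3/5) ^ q) \<le> m - (3/5) ^ q"
    using assms(2) by (intro mult_left_le_one_le) (auto simp: power_le_one)
  ultimately have "(1/2) ^ q * (1 + m) \<le> m" by (simp add: algebra_simps)
  moreover have "0 < 1 + m" using assms(2) zero_less_power[of "3/5::real" q] by linarith
  ultimately show ?thesis by (simp add: le_divide_eq)
qed

lemma finite_set_Pi_pmf:
  assumes "finite I" "\<And>i. i \<in> I \<Longrightarrow> finite (set_pmf (p i))"
  shows "finite (set_pmf (Pi_pmf I d p))"
proof -
  have "finite (PiE_dflt I d (set_pmf \<circ> p))" using assms by (intro finite_PiE_dflt) auto
  moreover have "set_pmf (Pi_pmf I d p) \<subseteq> PiE_dflt I d (set_pmf \<circ> p)"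
    using assms(1) by (rule set_Pi_pmf_subset')
  ultimately show ?thesis by (rule finite_subset[rotated])
qed

text \<open>Second moment method applied to the number of events \<open>A v\<close> that occur.\<close>
lemma measure_pmf_prob_UN_ge_negatively_correlated:
  fixes M :: "'a pmf" and A :: "'v \<Rightarrow> 'a set" and V :: "'v set"
  defines "m \<equiv> (\<Sum>v\<in>V. measure_pmf.prob M (A v))"
  assumes M: "finite (set_pmf M)" and V: "finite V"
    and neg: "\<And>v w. v \<in> V \<Longrightarrow> w \<in> V \<Longrightarrow> v \<noteq> w \<Longrightarrow>
      measure_pmf.prob M (A v \<inter> A w) \<le> measure_pmf.prob M (A v) * measure_pmf.prob M (A w)"
  shows "m / (1 + m) \<le> measure_pmf.prob M (\<Union>v\<in>V. A v)"
proof (cases "m = 0")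
  case False
  define Y where "Y x = (\<Sum>v\<in>V. indicator (A v) x :: real)" for x
  have int: "integrable (measure_pmf M) f" for f :: "'a \<Rightarrow> real"
    using M by (rule integrable_measure_pmf_finite)
  have "0 \<le> m" unfolding m_def by (intro sum_nonneg) simp
  with False have "0 < m" by simp
  have "measure_pmf.expectation M Y = m"
    unfolding Y_def m_def by (simp add: int)
  moreover have "measure_pmf.expectation M (\<lambda>x. Y x ^ 2) \<le> m + m ^ 2"
  proof -
    have "Y x ^ 2 = (\<Sum>v\<in>V. \<Sum>w\<in>V. indicator (A v \<inter> A w) x)" for x
      unfolding Y_def power2_eq_square sum_product by (simp add: indicator_inter_arith)
    then have "measure_pmf.expectation M (\<lambda>x. Y x ^ 2) = (\<Sum>v\<in>V. \<Sum>w\<in>V. measure_pmf.prob M (A v \<inter> A w))"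
      by (simp add: int)
    also have "\<dots> \<le> (\<Sum>v\<in>V. \<Sum>w\<in>V. (if v = w then measure_pmf.prob M (A v) else 0)
        + measure_pmf.prob M (A v) * measure_pmf.prob M (A w))"
      using neg by (intro sum_mono) (auto simp: measure_nonneg)
    also have "\<dots> = m + m ^ 2"
      unfolding m_def by (simp add: sum.distrib power2_eq_square sum_product V)
    finally show ?thesis .
  qed
  moreover have "x \<in> (\<Union>v\<in>V. A v)" if "Y x \<noteq> 0" for x
  proof (rule ccontr)
    assume "x \<notin> (\<Union>v\<in>V. A v)"
    then have "Y x = 0" by (simp add: Y_def)
    with that show False by contradiction
  qed
  ultimately have "m ^ 2 / (m + m ^ 2) \<le> measure_pmf.prob M (\<Union>v\<in>V. A v)"
    using measure_pmf.second_moment_method[where Y = Y and E = "\<Union>v\<in>V. A v" and S = "m + m ^ 2", OF int int]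
      \<open>0 < m\<close> by (simp add: add_pos_nonneg)
  moreover have "m ^ 2 / (m + m ^ 2) = m / (1 + m)"
  proof -
    have "m ^ 2 / (m + m ^ 2) = (m * m) / (m * (1 + m))" by (simp add: power2_eq_square algebra_simps)
    then show ?thesis using \<open>0 < m\<close> by simp
  qed
  ultimately show ?thesis by simp
qed simp

lemma common_value_prob_ge:
  fixes \<mu> :: "'b pmf" and C :: "'k \<Rightarrow> 'a set"
  assumes V: "finite V" "set_pmf \<mu> \<subseteq> V" and J: "finite J" "disjoint_family_on C J" "card J \<ge> 2"
    and C: "\<And>j. j \<in> J \<Longrightarrow> finite (C j) \<and> card (C j) = s"
    and s: "real (card V) ^ (card J - 1) \<le> real s ^ card J"
  shows "(1/2) ^ card J \<le> measure_pmf.prob (Pi_pmf (\<Union>j\<in>J. C j) d (\<lambda>_. \<mu>)) (common_value C J)"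
proof -
  let ?P = "Pi_pmf (\<Union>j\<in>J. C j) d (\<lambda>_. \<mu>)"
  define A where "A v = {x. \<forall>j\<in>J. \<exists>l\<in>C j. x l = v}" for v :: 'b
  define m where "m = (\<Sum>v\<in>V. measure_pmf.prob ?P (A v))"
  have hit: "measure_pmf.prob ?P (A v) = (1 - (1 - pmf \<mu> v) ^ s) ^ card J" for v
    unfolding A_def by (rule Pi_pmf_prob_hit_all[OF J(1,2) C])
  have neg: "measure_pmf.prob ?P (A v \<inter> A w) \<le> measure_pmf.prob ?P (A v) * measure_pmf.prob ?P (A w)"
    if "v \<noteq> w" for v w
    unfolding hit using Pi_pmf_prob_hit_all_both_le[OF J(1,2) that C]
    by (simp add: A_def power_mult_distrib)
  have "finite (set_pmf ?P)"
    using J C V finite_subset by (intro finite_set_Pi_pmf) auto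
  then have "m / (1 + m) \<le> measure_pmf.prob ?P (\<Union>v\<in>V. A v)"
    unfolding m_def using V(1) neg by (intro measure_pmf_prob_UN_ge_negatively_correlated)
  also have "\<dots> \<le> measure_pmf.prob ?P (common_value C J)"
    by (intro measure_pmf.finite_measure_mono) (auto simp: A_def common_value_def)
  finally show ?thesis
    using J(3) sum_hit_power_ge[OF V _ s] half_power_le_frac[of "card J" m]
    by (simp add: m_def hit)
qed

definition chunk :: "nat \<Rightarrow> nat \<Rightarrow> nat \<Rightarrow> nat \<Rightarrow> nat set" where
  "chunk z s i j = {(j - 1) * z + i * s <.. (j - 1) * z + i * s + s}"

lemma finite_chunk [simp]: "finite (chunk z s i j)"
  and card_chunk [simp]: "card (chunk z s i j) = s"
  by (simp_all add: chunk_def)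

lemma chunk_index:
  assumes "l \<in> chunk z s i j" "(i + 1) * s \<le> z"
  shows "(l - 1) div z = j - 1 \<and> (l - 1) mod z div s = i"
proof -
  define r where "r = l - ((j - 1) * z + i * s) - 1"
  have l: "l - 1 = (j - 1) * z + (i * s + r)" and r: "r < s"
    using assms(1) by (auto simp: chunk_def r_def)
  have "i * s + r < z" using r assms(2) by (simp add: algebra_simps)
  then show ?thesis unfolding l using r by simp
qed

lemma chunk_subset_block:
  assumes "(i + 1) * s \<le> z" "1 \<le> j"
  shows "chunk z s i j \<subseteq> {(j - 1) * z <.. j * z}"
proof -
  have "(j - 1) * z + z = j * z" using assms(2) by (cases j) auto
  then show ?thesis using assms(1) by (auto simp: chunk_def algebra_simps)
qed

lemma chunk_inj:
  assumes "(i + 1) * s \<le> z" "(i' + 1) * s \<le> z" "1 \<le> j" "1 \<le> j'"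
    and "l \<in> chunk z s i j" "l \<in> chunk z s i' j'"
  shows "i = i' \<and> j = j'"
  using chunk_index[OF assms(5,1)] chunk_index[OF assms(6,2)] assms(3,4) by auto

lemma common_value_chunk_subset_block_collision:
  assumes "(i + 1) * s \<le> z"
  shows "common_value (chunk z s i) {1..q} \<subseteq> block_collision q z"
proof
  fix x :: "nat \<Rightarrow> nat" assume "x \<in> common_value (chunk z s i) {1..q}"
  then obtain v where "\<forall>j\<in>{1..q}. \<exists>l\<in>chunk z s i j. x l = v" by (auto simp: common_value_def)
  then obtain ind where ind: "\<forall>j\<in>{1..q}. ind j \<in> chunk z s i j \<and> x (ind j) = v" by metis
  then have "(j - 1) * z < ind j \<and> ind j \<le> j * z" if "j \<in> {1..q}" for j
    using chunk_subset_block[OF assms, of j] that by fastforce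
  then show "x \<in> block_collision q z"
    using ind unfolding block_collision_def by (auto intro!: exI[of _ ind])
qed

lemma Suc_mult_le_of_less_div:
  fixes i s z :: nat
  assumes "i < z div s"
  shows "(i + 1) * s \<le> z"
proof -
  have "(i + 1) * s \<le> z div s * s" using assms by (intro mult_le_mono1) simp
  then show ?thesis by (meson div_times_less_eq_dividend le_trans)
qed

lemma disjoint_family_chunk:
  assumes "(i + 1) * s \<le> z"
  shows "disjoint_family_on (chunk z s i) {1..q}"
  unfolding disjoint_family_on_def using chunk_inj[OF assms assms] by (auto simp: disjoint_iff)

lemma disjoint_family_chunk_rounds:
  "disjoint_family_on (\<lambda>i. \<Union>j\<in>{1..q}. chunk z s i j) {..<z div s}"
  unfolding disjoint_family_on_def
proof (intro ballI impI equals0I)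
  fix i i' l assume i: "i \<in> {..<z div s}" "i' \<in> {..<z div s}" "i \<noteq> i'"
    and "l \<in> (\<Union>j\<in>{1..q}. chunk z s i j) \<inter> (\<Union>j\<in>{1..q}. chunk z s i' j)"
  then obtain j j' where "j \<in> {1..q}" "j' \<in> {1..q}" "l \<in> chunk z s i j" "l \<in> chunk z s i' j'"
    by blast
  with i show False
    using chunk_inj[OF Suc_mult_le_of_less_div[of i] Suc_mult_le_of_less_div[of i']] by auto
qed

lemma chunk_round_subset:
  assumes "(i + 1) * s \<le> z"
  shows "(\<Union>j\<in>{1..q}. chunk z s i j) \<subseteq> {1..q * z}"
proof
  fix l assume "l \<in> (\<Union>j\<in>{1..q}. chunk z s i j)"
  then obtain j where j: "j \<in> {1..q}" "l \<in> chunk z s i j" by blast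
  then have "(j - 1) * z < l" "l \<le> j * z" using chunk_subset_block[OF assms, of j] by auto
  moreover have "j * z \<le> q * z" using j by simp
  ultimately have "1 \<le> l" "l \<le> q * z" by linarith+
  then show "l \<in> {1..q * z}" by simp
qed

lemma block_collision_prob_ge:
  fixes \<mu> :: "nat pmf"
  assumes V: "finite V" "set_pmf \<mu> \<subseteq> V" and q: "q \<ge> 2"
    and s: "real (card V) ^ (q - 1) \<le> real s ^ q"
  shows "1 - (1 - (1/2) ^ q) ^ (z div s)
    \<le> measure_pmf.prob (Pi_pmf {1..q * z} d (\<lambda>_. \<mu>)) (block_collision q z)"
proof -
  let ?E = "\<lambda>i. common_value (chunk z s i) {1..q} :: (nat \<Rightarrow> nat) set"
  have "1 - (1 - (1/2) ^ q) ^ card {..<z div s}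
      \<le> measure_pmf.prob (Pi_pmf {1..q * z} d (\<lambda>_. \<mu>)) (\<Union>i<z div s. ?E i)"
  proof (rule Pi_pmf_prob_UN_independent_ge[OF _ _ disjoint_family_chunk_rounds])
    fix i assume "i \<in> {..<z div s}"
    then have fits: "(i + 1) * s \<le> z" by (intro Suc_mult_le_of_less_div) simp
    show "(\<Union>j\<in>{1..q}. chunk z s i j) \<subseteq> {1..q * z}" by (rule chunk_round_subset[OF fits])
    show "(1/2) ^ q \<le> measure_pmf.prob (Pi_pmf (\<Union>j\<in>{1..q}. chunk z s i j) d (\<lambda>_. \<mu>)) (?E i)"
      using common_value_prob_ge[OF V _ disjoint_family_chunk[OF fits]] q s by simp
  qed (simp_all add: determined_by_common_value)
  also have "\<dots> \<le> measure_pmf.prob (Pi_pmf {1..q * z} d (\<lambda>_. \<mu>)) (block_collision q z)"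
    using common_value_chunk_subset_block_collision[OF Suc_mult_le_of_less_div]
    by (intro measure_pmf.finite_measure_mono) (blast, simp)
  finally show ?thesis by simp
qed

lemma real_div_ge_quarter:
  fixes z s :: nat and t :: real
  assumes "1 \<le> t" "2 * t \<le> real z" "t \<le> real s" "real s < t + 1"
  shows "real z / (4 * t) \<le> real (z div s)"
proof -
  have "s > 0" "s \<le> z" using assms by linarith+
  then have k: "1 \<le> z div s" by (simp add: div_greater_zero_iff Suc_le_eq)
  have "z < (z div s + 1) * s" using \<open>s > 0\<close> by (simp add: dividend_less_div_times)
  then have "real z < real ((z div s + 1) * s)" by (metis of_nat_less_iff)
  also have "\<dots> = (real (z div s) + 1) * real s" by (simp add: algebra_simps)
  also have "\<dots> \<le> (2 * real (z div s)) * (2 * t)"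
    using k assms by (intro mult_mono) auto
  finally show ?thesis using assms by (simp add: divide_le_eq)
qed

lemma one_minus_power_le_exp:
  fixes x c y :: real
  assumes "0 \<le> x" "x < 1" "c \<le> - (1/4) * ln (1 - x)" "0 \<le> y" "y \<le> real k"
  shows "(1 - x) ^ k \<le> exp (- 4 * c * y)"
proof -
  define L where "L = ln (1 - x)"
  have "L \<le> 0" "L \<le> - 4 * c" using assms by (auto simp: L_def)
  have "(1 - x) ^ k = exp (real k * L)" using assms by (simp add: L_def exp_of_nat_mult)
  also have "real k * L \<le> y * L" using assms \<open>L \<le> 0\<close> by (intro mult_right_mono_neg) auto
  also have "y * L \<le> y * (- 4 * c)" using assms \<open>L \<le> - 4 * c\<close> by (intro mult_left_mono) auto
  finally show ?thesis by (simp add: mult.commute mult.left_commute)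
qed

lemma powr_one_minus_inverse_power:
  fixes a :: real and q :: nat
  assumes "0 < a" "1 \<le> q"
  shows "(a powr (1 - 1 / real q)) ^ q = a ^ (q - 1)"
proof -
  have "(1 - 1 / real q) * real q = real (q - 1)" using assms by (simp add: field_simps of_nat_diff)
  then show ?thesis using assms by (simp add: powr_realpow[symmetric] powr_powr)
qed

lemma block_collision_prob_ge_exp:
  fixes n q z :: nat and \<mu> :: "nat pmf" and c :: real
  defines "t \<equiv> real n powr (1 - 1 / real q)"
  assumes supp: "set_pmf \<mu> \<subseteq> {1..n}" and q: "1 \<le> q" and z: "2 * t \<le> real z"
    and c: "c \<le> - (1/4) * ln (1 - 2 powr (- real q))"
  shows "1 - exp (- c * real z / t) \<le> measure_pmf.prob (Pi_pmf {1..q * z} 0 (\<lambda>_. \<mu>)) (block_collision q z)"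
proof -
  have "n \<ge> 1" using supp set_pmf_not_empty[of \<mu>] by fastforce
  then have t: "1 \<le> t" using q unfolding t_def by (intro ge_one_powr_ge_zero) (auto simp: field_simps)
  show ?thesis
  proof (cases "q = 1")
    case True
    with t z have "block_collision q z = UNIV"
      by (auto simp: block_collision_def intro!: exI[of _ "\<lambda>_. 1"])
    then show ?thesis by simp
  next
    case False
    define s where "s = nat \<lceil>t\<rceil>"
    have s: "t \<le> real s" "real s < t + 1" using t unfolding s_def by linarith+
    have "real n ^ (q - 1) = t ^ q" using \<open>n \<ge> 1\<close> q by (simp add: t_def powr_one_minus_inverse_power)
    also have "\<dots> \<le> real s ^ q" using s t by (intro power_mono) auto
    finally have bound: "1 - (1 - (1/2) ^ q) ^ (z div s)
        \<le> measure_pmf.prob (Pi_pmf {1..q * z} 0 (\<lambda>_. \<mu>)) (block_collision q z)"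
      using supp q False by (intro block_collision_prob_ge) auto
    have "2 powr (- real q) = (1/2) ^ q"
      by (simp add: powr_minus powr_realpow power_one_over inverse_eq_divide)
    then have power: "(1 - (1/2) ^ q) ^ (z div s) \<le> exp (- 4 * c * (real z / (4 * t)))"
      using q t c s z real_div_ge_quarter[of t z s]
      by (intro one_minus_power_le_exp) (auto simp: power_less_one_iff)
    moreover have "exp (- 4 * c * (real z / (4 * t))) = exp (- c * real z / t)"
      using t by (simp add: field_simps)
    ultimately show ?thesis using bound by linarith
  qed
qed

lemma two_powr_le_ln:
  assumes "1 \<le> q"
  shows "2 powr (- real q - 2) \<le> - (1/4) * ln (1 - 2 powr (- real q))"
proof -
  have "0 \<le> 2 powr (- real q)" "2 powr (- real q) < 1" using assms by (auto simp: powr_less_one)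
  then have "2 powr (- real q) \<le> - ln (1 - 2 powr (- real q))"
    using ln_one_minus_pos_upper_bound by fastforce
  moreover have "2 powr (- real q - 2) = 2 powr (- real q) / 4" by (simp add: powr_diff)
  ultimately show ?thesis by simp
qed

theorem lemma2p3:
  fixes n q z :: nat and \<mu> :: "nat pmf"
  assumes "set_pmf \<mu> \<subseteq> {1..n}"
    and "q \<ge> 1"
    and "real z \<ge> 2 * real n powr (1 - 1 / real q)"
  shows "(\<forall>c::real. c \<le> - (1/4) * ln (1 - 2 powr (- real q)) \<longrightarrow>
            measure_pmf.prob (Pi_pmf {1..q*z} 0 (\<lambda>_. \<mu>)) (block_collision q z)
              \<ge> 1 - exp (- c * real z / real n powr (1 - 1 / real q)))
       \<and> (\<forall>c::real. c \<le> 2 powr (- real q - 2) \<longrightarrow>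
            measure_pmf.prob (Pi_pmf {1..q*z} 0 (\<lambda>_. \<mu>)) (block_collision q z)
              \<ge> 1 - exp (- c * real z / real n powr (1 - 1 / real q)))"
  using block_collision_prob_ge_exp[OF assms] two_powr_le_ln[OF assms(2)] by fastforce

end
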